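(* Let $F=F(A,p,u,x)$ be a $C^{2}$ function of $(A,p,u,x)\in\mathcal{S}^N\times\mathbb{R}^N\times\mathbb{R}\times\Omega$, $\Omega\subset\mathbb{R}^N=\mathbb{R}^{N'}\times\mathbb{R}^{N''}$. The condition $$\text{for each fixed }(p',x''),\ (a,b,c,p'',u,x')\mapsto F\left(\begin{pmatrix} a^{-1} & a^{-1}b\\ (a^{-1}b)^T & c+b^Ta^{-1}b\end{pmatrix},p',p'',u,x',x''\right)\text{ is locally convex}$$ is equivalent to the following: at every point $(A,p,u,x)$ with $A=\begin{pmatrix} a& b\\ b^T& c\end{pmatrix}$, $a$ positive definite, and for every $\widetilde X=((X_{ab}),(X_\alpha),Y,(Z_i))\in\mathcal{S}^N\times\mathbb{R}^{N''}\times\mathbb{R}\times\mathbb{R}^{N'}$, $$\begin{aligned} &\sum_{a,b,c,d=1}^N F^{ab,cd}X_{ab}X_{cd}+2\sum_{a,b=1}^N\sum_{k,l=1}^{N'}F^{ab}a^{kl}X_{ka}X_{lb}+2\sum_{a,b=1}^N\sum_{\alpha=N'+1}^N F^{ab,p_\alpha}X_{ab}X_\alpha\\ &+2\sum_{a,b=1}^N F^{ab,u}X_{ab}Y+2\sum_{a,b=1}^N\sum_{i=1}^{N'}F^{ab,x_i}X_{ab}Z_i+\sum_{\alpha,\beta=N'+1}^N F^{p_\alpha,p_\beta}X_\alpha X_\beta+2\sum_{\alpha=N'+1}^N F^{p_\alpha,u}X_\alpha Y\\ &+2\sum_{\alpha=N'+1}^N\sum_{i=1}^{N'}F^{p_\alpha,x_i}X_\alpha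 Z_i+F^{u,u}Y^2+2\sum_{i=1}^{N'}F^{u,x_i}YZ_i+\sum_{i,j=1}^{N'}F^{x_i,x_j}Z_iZ_j\ \ge 0, \end{aligned}$$ where all derivatives of $F$ are evaluated at $(A,p,u,x)$ and $(a^{kl})=a^{-1}$.
   Context: $N=N'+N''$; $x=(x',x'')$, $p=(p',p'')$ with primed parts in $\mathbb{R}^{N'}$ and double-primed parts in $\mathbb{R}^{N''}$; the components $X_\alpha$ of $\widetilde X$ are indexed by $\alpha=N'+1,\dots,N$ and $Z_i$ by $i=1,\dots,N'$. $\mathcal{S}^n$ is the set of real symmetric $n\times n$ matrices; $A\in\mathcal{S}^N$ is written $\begin{pmatrix} a& b\\ b^T& c\end{pmatrix}$ with $a\in\mathcal{S}^{N'}$, $b\in\mathbb{R}^{N'\times N''}$, $c\in\mathcal{S}^{N''}$. Notation: $F^{ab}=\partial F/\partial A_{ab}$, $F^{ab,cd}=\partial^2F/\partial A_{ab}\partial A_{cd}$, $F^{ab,p_c}=\partial^2F/\partial A_{ab}\partial p_c$, $F^{ab,u}=\partial^2F/\partial A_{ab}\partial u$, $F^{ab,x_i}=\partial^2F/\partial A_{ab}\partial x_i$, $F^{p_a,p_b}=\partial^2F/\partial p_a\partial p_b$, $F^{p_a,u}$, $F^{p_a,x_i}$, $F^{u,u}$, $F^{u,x_i}$, $F^{x_i,x_j}$ the corresponding second partial derivatives. *)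

theory Defs
  imports "HOL-Analysis.Analysis"
begin

type_synonym ('n1,'n2) pt =
  "(real^('n1 + 'n2)^('n1 + 'n2)) \<times> (real^('n1 + 'n2)) \<times> real \<times> (real^('n1 + 'n2))"

text \<open>Index set of R^N = R^N' x R^N'': the sum type 'n1 + 'n2
  (Inl i : the first N' coordinates, Inr alpha : the last N'' coordinates).\<close>

definition vjoin :: "real^'n1::finite \<Rightarrow> real^'n2 \<Rightarrow> real^('n1 + 'n2)" where
  "vjoin x1 x2 = (\<chi> r. case r of Inl i \<Rightarrow> x1 $ i | Inr j \<Rightarrow> x2 $ j)"

definition mkblk :: "real^'n1::finite^'n1 \<Rightarrow> real^'n2::finite^'n1 \<Rightarrow> real^'n2^'n2
    \<Rightarrow> real^('n1 + 'n2)^('n1 + 'n2)" where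
  "mkblk P Q R = (\<chi> r s. case r of
       Inl i \<Rightarrow> (case s of Inl j \<Rightarrow> P $ i $ j | Inr \<beta> \<Rightarrow> Q $ i $ \<beta>)
     | Inr \<alpha> \<Rightarrow> (case s of Inl j \<Rightarrow> Q $ j $ \<alpha> | Inr \<beta> \<Rightarrow> R $ \<alpha> $ \<beta>))"

definition ul_block :: "real^('n1::finite + 'n2::finite)^('n1 + 'n2) \<Rightarrow> real^'n1^'n1" where
  "ul_block A = (\<chi> i j. A $ Inl i $ Inl j)"

definition symmetric_mat :: "real^'n::finite^'n \<Rightarrow> bool" where
  "symmetric_mat A \<longleftrightarrow> transpose A = A"

definition pos_def :: "real^'n::finite^'n \<Rightarrow> bool" where
  "pos_def a \<longleftrightarrow> symmetric_mat a \<and> (\<forall>v. v \<noteq> 0 \<longrightarrow> v \<bullet> (a *v v) > 0)"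

text \<open>Symmetrisation; F is only given on symmetric matrices, so smoothness of F on
  S^N x R^N x R x Omega is expressed as smoothness of F composed with the linear
  projection onto S^N.\<close>
definition symm :: "real^'n::finite^'n \<Rightarrow> real^'n^'n" where
  "symm A = (1/2) *\<^sub>R (A + transpose A)"

definition sym_ext :: "(real^'n::finite^'n \<Rightarrow> real^'n \<Rightarrow> real \<Rightarrow> real^'n \<Rightarrow> real)
    \<Rightarrow> ((real^'n^'n) \<times> (real^'n) \<times> real \<times> (real^'n)) \<Rightarrow> real" where
  "sym_ext F = (\<lambda>(A, p, u, x). F (symm A) p u x)"

definition C2_derivs :: "('v::real_normed_vector \<Rightarrow> real) \<Rightarrow> ('v \<Rightarrow> 'v \<Rightarrow> real)
    \<Rightarrow> ('v \<Rightarrow> 'v \<Rightarrow> 'v \<Rightarrow> real) \<Rightarrow> 'v set \<Rightarrow> bool" where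
  "C2_derivs f Df D2f S \<longleftrightarrow>
     open S \<and>
     (\<forall>z\<in>S. (f has_derivative Df z) (at z)) \<and>
     (\<forall>z\<in>S. \<forall>h. ((\<lambda>w. Df w h) has_derivative D2f z h) (at z)) \<and>
     (\<forall>h k. continuous_on S (\<lambda>z. D2f z h k))"

definition locally_convex_on :: "'v::real_normed_vector set \<Rightarrow> ('v \<Rightarrow> real) \<Rightarrow> bool" where
  "locally_convex_on D g \<longleftrightarrow> (\<forall>w\<in>D. \<exists>e>0. convex_on (ball w e \<inter> D) g)"

definition Gtrans :: "(real^('n1::finite + 'n2::finite)^('n1 + 'n2) \<Rightarrow> real^('n1 + 'n2) \<Rightarrow> real
      \<Rightarrow> real^('n1 + 'n2) \<Rightarrow> real) \<Rightarrow> real^'n1 \<Rightarrow> real^'n2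
    \<Rightarrow> ((real^'n1^'n1) \<times> (real^'n2^'n1) \<times> (real^'n2^'n2) \<times> (real^'n2) \<times> real \<times> (real^'n1)) \<Rightarrow> real" where
  "Gtrans F p1 x2 = (\<lambda>(a, b, c, p2, u, x1).
     F (mkblk (matrix_inv a) (matrix_inv a ** b) (c + transpose b ** matrix_inv a ** b))
       (vjoin p1 p2) u (vjoin x1 x2))"

definition Gdom :: "(real^('n1::finite + 'n2::finite)) set \<Rightarrow> real^'n2
    \<Rightarrow> ((real^'n1^'n1) \<times> (real^'n2^'n1) \<times> (real^'n2^'n2) \<times> (real^'n2) \<times> real \<times> (real^'n1)) set" where
  "Gdom \<Omega> x2 = {(a, b, c, p2, u, x1). pos_def a \<and> symmetric_mat c \<and> vjoin x1 x2 \<in> \<Omega>}"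

text \<open>The Hessian part (all terms with second derivatives of F)
  is the second derivative of F in direction h = (X, (0,X''), Y, (Z,0)); the remaining
  term 2 sum F^{ab} a^{kl} X_{ka} X_{lb} is 2 DF[M] with M_{ab} = sum_{k,l} X_{ka} a^{kl} X_{lb}.\<close>
definition quad_form :: "(('n1::finite,'n2::finite) pt \<Rightarrow> ('n1,'n2) pt \<Rightarrow> real)
    \<Rightarrow> (('n1,'n2) pt \<Rightarrow> ('n1,'n2) pt \<Rightarrow> ('n1,'n2) pt \<Rightarrow> real)
    \<Rightarrow> ('n1,'n2) pt \<Rightarrow> real^('n1 + 'n2)^('n1 + 'n2) \<Rightarrow> real^'n2 \<Rightarrow> real \<Rightarrow> real^'n1 \<Rightarrow> real" where
  "quad_form DF D2F z X X2 Y Z =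
     (let (A, p, u, x) = z;
          ainv = matrix_inv (ul_block A);
          h = (X, vjoin 0 X2, Y, vjoin Z 0);
          M = (\<chi> a b. \<Sum>k\<in>UNIV. \<Sum>l\<in>UNIV. X $ Inl k $ a * ainv $ k $ l * X $ Inl l $ b)
      in D2F z h h + 2 * DF z (M, 0, 0, 0))"

end

theory Submission
  imports Defs
begin

text \<open>
  Write \<open>T(a, b, c)\<close> for the block matrix \<open>[[a\<^sup>-\<^sup>1, a\<^sup>-\<^sup>1b], [(a\<^sup>-\<^sup>1b)\<^sup>T, c + b\<^sup>Ta\<^sup>-\<^sup>1b]]\<close>.
  Convexity of the transformed function is tested along lines \<open>s \<mapsto> w + s d\<close> in the
  variables \<open>(a, b, c, p'', u, x')\<close>; such a line is mapped to a curve \<open>\<kappa>(s)\<close> in the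
  variables \<open>(A, p, u, x)\<close> which is affine in \<open>p, u, x\<close> and has matrix part \<open>T(s)\<close>.
  Writing \<open>T = E\<^sup>T a\<^sup>-\<^sup>1 E + diag(0, c)\<close> with \<open>E = [I | b]\<close> and differentiating twice
  (using \<open>(a\<^sup>-\<^sup>1)' = -a\<^sup>-\<^sup>1 a' a\<^sup>-\<^sup>1\<close>) one finds \<open>T'' = 2 R\<^sup>T a R\<close>, where \<open>R\<close> is the top
  block row of \<open>T'\<close> and \<open>a\<close> is the inverse of the upper left block of \<open>T\<close>.  Hence
  \<open>(F \<circ> \<kappa>)'' = D\<^sup>2F[\<kappa>', \<kappa>'] + DF[\<kappa>'']\<close> is exactly the quadratic form of the lemma,
  evaluated at \<open>\<kappa>(s)\<close> in the direction \<open>(T', p'', u', x')\<close>.  Conversely every symmetric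
  \<open>A\<close> with positive definite upper left block and every symmetric \<open>X\<close> arise as \<open>T(0)\<close>
  and \<open>T'(0)\<close> of such a line, so both conditions are equivalent to convexity of \<open>F \<circ> \<kappa>\<close>
  near each point of each line.
\<close>

section \<open>Matrix algebra\<close>

lemma matrix_mul_diff_left: "(A::real^'n^'m) ** (B - C) = A ** B - A ** C"
  by (simp add: matrix_matrix_mult_def vec_eq_iff sum_subtractf right_diff_distrib)

lemma matrix_mul_diff_right: "((B::real^'n^'m) - C) ** A = B ** A - C ** A"
  by (simp add: matrix_matrix_mult_def vec_eq_iff sum_subtractf left_diff_distrib)

lemma matrix_mul_add_right: "((B::real^'n^'m) + C) ** A = B ** A + C ** A"
  by (simp add: matrix_matrix_mult_def vec_eq_iff sum.distrib distrib_right)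

lemma matrix_mul_minus_left: "(- (B::real^'n^'m)) ** A = - (B ** A)"
  by (simp add: matrix_matrix_mult_def vec_eq_iff sum_negf)

lemma matrix_mul_minus_right: "(B::real^'n^'m) ** (- A) = - (B ** A)"
  by (simp add: matrix_matrix_mult_def vec_eq_iff sum_negf)

lemma matrix_mul_scaleR_left: "(k *\<^sub>R (B::real^'n^'m)) ** A = k *\<^sub>R (B ** A)"
  by (rule scalar_matrix_assoc[symmetric])

lemma matrix_mul_scaleR_right: "(B::real^'n^'m) ** (k *\<^sub>R A) = k *\<^sub>R (B ** A)"
  by (simp add: matrix_matrix_mult_def vec_eq_iff sum_distrib_left mult_ac)

lemma matrix_mul_zero_left: "(0::real^'n^'m) ** A = 0"
  by (simp add: matrix_matrix_mult_def vec_eq_iff)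

lemma matrix_mul_zero_right: "(A::real^'n^'m) ** 0 = 0"
  by (simp add: matrix_matrix_mult_def vec_eq_iff)

lemma transpose_add: "transpose ((A::real^'n^'m) + B) = transpose A + transpose B"
  by (simp add: transpose_def vec_eq_iff)

lemma transpose_diff: "transpose ((A::real^'n^'m) - B) = transpose A - transpose B"
  by (simp add: transpose_def vec_eq_iff)

lemma transpose_minus: "transpose (- (A::real^'n^'m)) = - transpose A"
  by (simp add: transpose_def vec_eq_iff)

lemma transpose_zero: "transpose (0::real^'n^'m) = 0"
  by (simp add: transpose_def vec_eq_iff)

lemmas matrix_algebra_simps =
  matrix_add_ldistrib matrix_mul_add_right matrix_mul_diff_left matrix_mul_diff_right
  matrix_mul_minus_left matrix_mul_minus_right matrix_mul_scaleR_left matrix_mul_scaleR_right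
  matrix_mul_zero_left matrix_mul_zero_right
  transpose_add transpose_diff transpose_minus transpose_zero transpose_scalar matrix_transpose_mul

lemma matrix_mul_cancel_left: "(A::real^'n::finite^'n) ** B = mat 1 \<Longrightarrow> A ** (B ** X) = X"
  by (simp add: matrix_mul_assoc)

text \<open>On matrices \<open>*\<close> is the entrywise product; simplification turns \<open>X + X\<close> into \<open>2 * X\<close>,
  which this rule turns back into a scalar multiple.\<close>

lemma numeral_mult_matrix: "numeral k * (X::real^'n^'m) = (numeral k::real) *\<^sub>R X"
  by (simp add: vec_eq_iff)

lemma bounded_bilinear_matrix_mul:
  "bounded_bilinear ((**) :: real^'n::finite^'m::finite \<Rightarrow> real^'p::finite^'n \<Rightarrow> real^'p^'m)"
  by (simp add: bilinear_conv_bounded_bilinear[symmetric] bilinear_def linear_iff matrix_algebra_simps)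

lemma bounded_linear_transpose: "bounded_linear (transpose :: real^'n::finite^'m::finite \<Rightarrow> real^'m^'n)"
  by (simp add: linear_conv_bounded_linear[symmetric] linear_iff matrix_algebra_simps)

lemma has_vector_derivative_matrix_mul:
  fixes f :: "real \<Rightarrow> real^'n::finite^'m::finite" and g :: "real \<Rightarrow> real^'p::finite^'n"
  assumes "(f has_vector_derivative f') (at t)" "(g has_vector_derivative g') (at t)"
  shows "((\<lambda>s. f s ** g s) has_vector_derivative (f t ** g' + f' ** g t)) (at t)"
  using bounded_bilinear.has_vector_derivative[OF bounded_bilinear_matrix_mul assms] .

lemma has_vector_derivative_transpose:
  fixes f :: "real \<Rightarrow> real^'n::finite^'m::finite"
  assumes "(f has_vector_derivative f') (at t)"
  shows "((\<lambda>s. transpose (f s)) has_vector_derivative (transpose f')) (at t)"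
  using bounded_linear.has_vector_derivative[OF bounded_linear_transpose assms] .

section \<open>Inversion of matrices\<close>

lemma matrix_inv_right: "invertible (A::real^'n::finite^'n) \<Longrightarrow> A ** matrix_inv A = mat 1"
  and matrix_inv_left: "invertible (A::real^'n::finite^'n) \<Longrightarrow> matrix_inv A ** A = mat 1"
  unfolding invertible_def matrix_inv_def by (metis (mono_tags, lifting) someI)+

lemma matrix_inv_unique:
  fixes A :: "real^'n::finite^'n"
  assumes "A ** B = mat 1"
  shows "matrix_inv A = B"
  by (metis assms invertible_def matrix_inv_left matrix_left_right_inverse matrix_mul_assoc matrix_mul_lid matrix_mul_rid)

lemma matrix_inv_matrix_inv: "invertible (A::real^'n::finite^'n) \<Longrightarrow> matrix_inv (matrix_inv A) = A"
  by (rule matrix_inv_unique) (rule matrix_inv_left)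

lemma transpose_matrix_inv_symmetric:
  fixes A :: "real^'n::finite^'n"
  assumes "invertible A" "transpose A = A"
  shows "transpose (matrix_inv A) = matrix_inv A"
proof -
  have "transpose (matrix_inv A) ** A = mat 1"
    by (metis assms matrix_inv_right matrix_transpose_mul transpose_mat)
  then show ?thesis
    by (metis matrix_inv_unique matrix_left_right_inverse)
qed

lemma matrix_inv_diff:
  fixes A M :: "real^'n::finite^'n"
  assumes "invertible A" "invertible M"
  shows "matrix_inv M - matrix_inv A = - (matrix_inv M ** (M - A) ** matrix_inv A)"
  by (simp add: matrix_algebra_simps matrix_mul_assoc[symmetric] matrix_inv_right[OF assms(1)])
     (simp add: matrix_mul_assoc matrix_inv_left[OF assms(2)])

lemma eventually_invertible:
  fixes A :: "real^'n::finite^'n"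
  assumes "invertible A"
  shows "\<forall>\<^sub>F M in nhds A. invertible M"
proof -
  have "continuous_on UNIV (det :: real^'n^'n \<Rightarrow> real)"
    unfolding det_def by (intro continuous_intros)
  then have "(det \<longlongrightarrow> det A) (nhds A)"
    by (simp add: continuous_on_def tendsto_nhds_iff) 
  then show ?thesis
    using assms by (simp add: invertible_det_nz tendsto_imp_eventually_ne)
qed

lemma matrix_mul_norm_bound:
  obtains K where "K > 0"
    "\<And>X Y. norm ((X :: real^'n::finite^'m::finite) ** (Y :: real^'p::finite^'n)) \<le> norm X * norm Y * K"
  using bounded_bilinear.pos_bounded[OF bounded_bilinear_matrix_mul] by blast

lemma matrix_inv_lipschitz_near:
  fixes A :: "real^'n::finite^'n"
  assumes "invertible A"
  obtains L where "\<forall>\<^sub>F M in at A. norm (matrix_inv M - matrix_inv A) \<le> L * norm (M - A)"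
proof -
  define B where "B = matrix_inv A"
  obtain K where K: "K > 0" "\<And>(X :: real^'n^'n) (Y :: real^'n^'n). norm (X ** Y) \<le> norm X * norm Y * K"
    using matrix_mul_norm_bound by metis
  define C where "C = norm B * K * K"
  have C: "C \<ge> 0" using K unfolding C_def by simp
  have diff_le: "norm (matrix_inv M - B) \<le> norm (matrix_inv M) * (norm (M - A) * C)"
    if "invertible M" for M
  proof -
    have "norm (matrix_inv M - B) = norm (matrix_inv M ** (M - A) ** B)"
      using matrix_inv_diff[OF assms that] by (simp add: B_def)
    also have "\<dots> \<le> norm (matrix_inv M ** (M - A)) * norm B * K" by (rule K(2))
    also have "\<dots> \<le> norm (matrix_inv M) * norm (M - A) * K * norm B * K"
      using K by (intro mult_right_mono) auto
    finally show ?thesis by (simp add: C_def ac_simps)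
  qed
  have "\<forall>\<^sub>F M in at A. invertible M \<and> norm (M - A) * C \<le> 1/2"
  proof -
    have "((\<lambda>M. norm (M - A) * C) \<longlongrightarrow> norm (A - A) * C) (at A)"
      by (intro tendsto_intros)
    then have "\<forall>\<^sub>F M in at A. norm (M - A) * C < 1/2"
      by (rule order_tendstoD(2)) simp
    moreover have "\<forall>\<^sub>F M in at A. invertible M"
      using eventually_invertible[OF assms] by (auto simp: eventually_at_filter elim: eventually_mono)
    ultimately show ?thesis by eventually_elim auto
  qed
  then have "\<forall>\<^sub>F M in at A. norm (matrix_inv M - B) \<le> 2 * norm B * C * norm (M - A)"
  proof eventually_elim
    case (elim M)
    have "norm (matrix_inv M) * (norm (M - A) * C) \<le> norm (matrix_inv M) * (1/2)"
      using elim by (intro mult_left_mono) auto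
    then have "norm (matrix_inv M) \<le> 2 * norm B"
      using diff_le[of M] elim norm_triangle_sub[of "matrix_inv M" B] by linarith
    then have "norm (matrix_inv M) * (norm (M - A) * C) \<le> 2 * norm B * (norm (M - A) * C)"
      using C by (intro mult_right_mono) auto
    then show ?case
      using diff_le[of M] elim by (simp add: ac_simps)
  qed
  then show ?thesis
    using that unfolding B_def by blast
qed

lemma isCont_matrix_inv:
  fixes A :: "real^'n::finite^'n"
  assumes "invertible A"
  shows "isCont matrix_inv A"
proof -
  obtain L where "\<forall>\<^sub>F M in at A. norm (matrix_inv M - matrix_inv A) \<le> L * norm (M - A)"
    using matrix_inv_lipschitz_near[OF assms] by blast
  moreover have "((\<lambda>M. L * norm (M - A)) \<longlongrightarrow> 0) (at A)"
    by (auto intro!: tendsto_eq_intros)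
  ultimately have "((\<lambda>M. matrix_inv M - matrix_inv A) \<longlongrightarrow> 0) (at A)"
    by (rule Lim_null_comparison)
  then show ?thesis
    unfolding isCont_def by (rule LIM_zero_cancel)
qed

lemma has_derivative_matrix_inv:
  fixes A :: "real^'n::finite^'n"
  assumes "invertible A"
  shows "(matrix_inv has_derivative (\<lambda>H. - (matrix_inv A ** H ** matrix_inv A))) (at A)"
  unfolding has_derivative_iff_norm
proof
  define B where "B = matrix_inv A"
  show "bounded_linear (\<lambda>H. - (B ** H ** B))"
    by (simp add: linear_conv_bounded_linear[symmetric] linear_iff matrix_algebra_simps)
  obtain K where K: "K > 0" "\<And>(X :: real^'n^'n) (Y :: real^'n^'n). norm (X ** Y) \<le> norm X * norm Y * K"
    using matrix_mul_norm_bound by metis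
  have "\<forall>\<^sub>F M in at A. invertible M"
    using eventually_invertible[OF assms] by (auto simp: eventually_at_filter elim: eventually_mono)
  then have "\<forall>\<^sub>F M in at A.
      norm (matrix_inv M - B - - (B ** (M - A) ** B)) / norm (M - A) \<le> norm (B - matrix_inv M) * (norm B * K * K)"
  proof eventually_elim
    case (elim M)
    have "norm (matrix_inv M - B - - (B ** (M - A) ** B)) = norm ((B - matrix_inv M) ** (M - A) ** B)"
      unfolding matrix_inv_diff[OF assms elim, folded B_def] by (simp add: matrix_mul_diff_right)
    also have "\<dots> \<le> norm ((B - matrix_inv M) ** (M - A)) * norm B * K" by (rule K(2))
    also have "\<dots> \<le> norm (B - matrix_inv M) * norm (M - A) * K * norm B * K"
      using K by (intro mult_right_mono) auto
    finally have "norm (matrix_inv M - B - - (B ** (M - A) ** B))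
        \<le> norm (M - A) * (norm (B - matrix_inv M) * (norm B * K * K))"
      by (simp only: ac_simps)
    then show ?case
      by (cases "M = A") (simp_all add: divide_le_eq mult.commute)
  qed
  moreover have "((\<lambda>M. norm (B - matrix_inv M) * (norm B * K * K)) \<longlongrightarrow> 0) (at A)"
  proof -
    have "(matrix_inv \<longlongrightarrow> B) (at A)"
      using isCont_matrix_inv[OF assms] by (simp add: isCont_def B_def)
    then show ?thesis
      by (auto intro!: tendsto_eq_intros)
  qed
  ultimately show "((\<lambda>M. norm (matrix_inv M - B - - (B ** (M - A) ** B)) / norm (M - A)) \<longlongrightarrow> 0) (at A)"
    by (auto intro: Lim_null_comparison)
qed

lemma has_vector_derivative_matrix_inv:
  fixes f :: "real \<Rightarrow> real^'n::finite^'n"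
  assumes "(f has_vector_derivative f') (at t)" "invertible (f t)"
  shows "((\<lambda>s. matrix_inv (f s)) has_vector_derivative - (matrix_inv (f t) ** f' ** matrix_inv (f t))) (at t)"
  using has_derivative_compose[OF assms(1)[unfolded has_vector_derivative_def]
      has_derivative_matrix_inv[OF assms(2)]]
  by (simp add: has_vector_derivative_def matrix_algebra_simps)

section \<open>Positive definite matrices\<close>

lemma pos_def_invertible: "pos_def (a::real^'n::finite^'n) \<Longrightarrow> invertible a"
  unfolding pos_def_def
  by (metis inner_zero_right invertible_left_inverse less_irrefl matrix_left_invertible_ker)

lemma pos_def_matrix_inv:
  fixes a :: "real^'n::finite^'n"
  assumes "pos_def a"
  shows "pos_def (matrix_inv a)"
proof -
  have inv: "invertible a" by (rule pos_def_invertible[OF assms])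
  have "v \<bullet> (matrix_inv a *v v) > 0" if "v \<noteq> 0" for v
  proof -
    define w where "w = matrix_inv a *v v"
    have v: "v = a *v w"
      unfolding w_def by (simp add: matrix_vector_mul_assoc matrix_inv_right[OF inv])
    then have "w \<noteq> 0" using that by auto
    then have "w \<bullet> (a *v w) > 0"
      using assms unfolding pos_def_def by blast
    moreover have "v \<bullet> (matrix_inv a *v v) = v \<bullet> w" by (simp add: w_def)
    moreover have "\<dots> = w \<bullet> (a *v w)" by (simp add: v inner_commute)
    ultimately show ?thesis by simp
  qed
  then show ?thesis
    using assms transpose_matrix_inv_symmetric[OF inv] unfolding pos_def_def symmetric_mat_def by auto
qed

lemma pos_def_convex_combination:
  fixes a1 a2 :: "real^'n::finite^'n"
  assumes "pos_def a1" "pos_def a2" "0 \<le> s" "s \<le> 1"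
  shows "pos_def ((1 - s) *\<^sub>R a1 + s *\<^sub>R a2)"
proof -
  have "v \<bullet> (((1 - s) *\<^sub>R a1 + s *\<^sub>R a2) *v v) > 0" if "v \<noteq> 0" for v
  proof -
    have "v \<bullet> (a1 *v v) > 0" "v \<bullet> (a2 *v v) > 0"
      using assms(1,2) that unfolding pos_def_def by auto
    moreover have "v \<bullet> (((1 - s) *\<^sub>R a1 + s *\<^sub>R a2) *v v) = (1 - s) * (v \<bullet> (a1 *v v)) + s * (v \<bullet> (a2 *v v))"
      by (simp add: matrix_vector_mult_add_rdistrib scaleR_matrix_vector_assoc[symmetric] inner_add_right)
    ultimately show ?thesis
      using assms(3,4) by (cases "s = 1") (auto intro: add_pos_nonneg)
  qed
  then show ?thesis
    using assms(1,2) unfolding pos_def_def symmetric_mat_def by (simp add: matrix_algebra_simps)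
qed

lemma pos_def_bounded_below:
  fixes a :: "real^'n::finite^'n"
  assumes "pos_def a"
  obtains m where "m > 0" "\<And>v. m * (norm v)\<^sup>2 \<le> v \<bullet> (a *v v)"
proof -
  have "continuous_on (sphere 0 1) (\<lambda>v::real^'n. v \<bullet> (a *v v))"
    by (intro continuous_on_inner continuous_on_id linear_continuous_on matrix_vector_mul_bounded_linear)
  moreover have "sphere (0::real^'n) 1 \<noteq> {}" by simp
  ultimately obtain v0 where v0: "v0 \<in> sphere 0 1" "\<And>w. w \<in> sphere 0 1 \<Longrightarrow> v0 \<bullet> (a *v v0) \<le> w \<bullet> (a *v w)"
    using continuous_attains_inf[OF compact_sphere] by blast
  show ?thesis
  proof
    show "v0 \<bullet> (a *v v0) > 0"
      using assms v0(1) unfolding pos_def_def by (metis mem_sphere_0 norm_zero zero_neq_one)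
    show "v0 \<bullet> (a *v v0) * (norm v)\<^sup>2 \<le> v \<bullet> (a *v v)" for v
    proof (cases "v = 0")
      case False
      have "v0 \<bullet> (a *v v0) \<le> (v /\<^sub>R norm v) \<bullet> (a *v (v /\<^sub>R norm v))"
        using False by (intro v0(2)) simp
      also have "\<dots> = (v \<bullet> (a *v v)) / (norm v)\<^sup>2"
        by (simp add: matrix_vector_mult_scaleR power2_eq_square divide_inverse)
      finally show ?thesis
        using False by (simp add: le_divide_eq)
    qed simp
  qed
qed

lemma eventually_pos_def_perturb:
  fixes a \<alpha> :: "real^'n::finite^'n"
  assumes "pos_def a" "symmetric_mat \<alpha>"
  shows "\<forall>\<^sub>F s in nhds 0. pos_def (a + s *\<^sub>R \<alpha>)"
proof -
  obtain m where m: "m > 0" "\<And>v. m * (norm v)\<^sup>2 \<le> v \<bullet> (a *v v)"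
    using pos_def_bounded_below[OF assms(1)] by blast
  obtain K where K: "K > 0" "\<And>v. norm (\<alpha> *v v) \<le> norm v * K"
    using bounded_linear.pos_bounded[OF matrix_vector_mul_bounded_linear[of \<alpha>]] by blast
  have "pos_def (a + s *\<^sub>R \<alpha>)" if s: "\<bar>s\<bar> * K < m" for s
  proof -
    have "v \<bullet> ((a + s *\<^sub>R \<alpha>) *v v) > 0" if "v \<noteq> 0" for v
    proof -
      have "\<bar>v \<bullet> (\<alpha> *v v)\<bar> \<le> norm v * norm (\<alpha> *v v)" by (rule Cauchy_Schwarz_ineq2)
      also have "\<dots> \<le> norm v * (norm v * K)" using K(2) by (rule mult_left_mono) simp
      finally have "\<bar>v \<bullet> (\<alpha> *v v)\<bar> \<le> K * (norm v)\<^sup>2" by (simp add: power2_eq_square ac_simps)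
      then have "\<bar>s * (v \<bullet> (\<alpha> *v v))\<bar> \<le> \<bar>s\<bar> * K * (norm v)\<^sup>2"
        by (simp add: abs_mult mult.assoc mult_left_mono)
      also have "\<dots> < m * (norm v)\<^sup>2"
        using s that by (intro mult_strict_right_mono) auto
      finally have "- (m * (norm v)\<^sup>2) < s * (v \<bullet> (\<alpha> *v v))" by linarith
      moreover have "v \<bullet> ((a + s *\<^sub>R \<alpha>) *v v) = v \<bullet> (a *v v) + s * (v \<bullet> (\<alpha> *v v))"
        by (simp add: matrix_vector_mult_add_rdistrib scaleR_matrix_vector_assoc[symmetric] inner_add_right)
      ultimately show ?thesis
        using m(2)[of v] by linarith
    qed
    with assms show ?thesis
      unfolding pos_def_def symmetric_mat_def by (simp add: matrix_algebra_simps)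
  qed
  moreover have "\<forall>\<^sub>F s in nhds 0. \<bar>s\<bar> * K < m"
    unfolding eventually_nhds_metric using m(1) K(1)
    by (intro exI[of _ "m / K"]) (simp add: dist_real_def pos_less_divide_eq)
  ultimately show ?thesis
    by (auto elim: eventually_mono)
qed

section \<open>Block matrices\<close>

definition hcat :: "real^'n1::finite^'m::finite \<Rightarrow> real^'n2::finite^'m \<Rightarrow> real^('n1 + 'n2)^'m" where
  "hcat U V = (\<chi> k r. case r of Inl i \<Rightarrow> U $ k $ i | Inr j \<Rightarrow> V $ k $ j)"

definition top_rows :: "real^'n::finite^('n1::finite + 'n2::finite) \<Rightarrow> real^'n^'n1" where
  "top_rows X = (\<chi> k. X $ Inl k)"

lemma hcat_nth [simp]: "hcat U V $ k $ Inl i = U $ k $ i" "hcat U V $ k $ Inr j = V $ k $ j"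
  by (simp_all add: hcat_def)

lemma mkblk_nth [simp]:
  "mkblk P Q R $ Inl i $ Inl j = P $ i $ j"
  "mkblk P Q R $ Inl i $ Inr \<beta> = Q $ i $ \<beta>"
  "mkblk P Q R $ Inr \<alpha> $ Inl j = Q $ j $ \<alpha>"
  "mkblk P Q R $ Inr \<alpha> $ Inr \<beta> = R $ \<alpha> $ \<beta>"
  by (simp_all add: mkblk_def)

lemma vec_eq_iff_Plus: "(x::'a^('n1::finite + 'n2::finite)) = y \<longleftrightarrow> (\<forall>i. x $ Inl i = y $ Inl i) \<and> (\<forall>j. x $ Inr j = y $ Inr j)"
  by (simp add: vec_eq_iff split_sum_all)

lemma mkblk_eq_iff: "A = mkblk P Q R \<longleftrightarrow>
   (\<forall>i j. A $ Inl i $ Inl j = P $ i $ j) \<and> (\<forall>i j. A $ Inl i $ Inr j = Q $ i $ j) \<and>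
   (\<forall>i j. A $ Inr i $ Inl j = Q $ j $ i) \<and> (\<forall>i j. A $ Inr i $ Inr j = R $ i $ j)"
  by (auto simp: vec_eq_iff_Plus)

lemma mkblk_inject: "mkblk P Q R = mkblk P' Q' R' \<longleftrightarrow> P = P' \<and> Q = Q' \<and> R = R'"
proof
  assume eq: "mkblk P Q R = mkblk P' Q' R'"
  have "P $ i $ j = P' $ i $ j" "Q $ i $ k = Q' $ i $ k" "R $ l $ k = R' $ l $ k" for i j k l
    by (metis eq mkblk_nth(1), metis eq mkblk_nth(2), metis eq mkblk_nth(4))
  then show "P = P' \<and> Q = Q' \<and> R = R'" by (simp add: vec_eq_iff)
qed simp

lemma symmetric_mat_eq_mkblk:
  assumes "symmetric_mat (A::real^('n1::finite + 'n2::finite)^('n1 + 'n2))"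
  shows "A = mkblk (ul_block A) (\<chi> i j. A $ Inl i $ Inr j) (\<chi> i j. A $ Inr i $ Inr j)"
proof -
  have "A $ Inr i $ Inl j = A $ Inl j $ Inr i" for i j
  proof -
    have "A $ Inr i $ Inl j = transpose A $ Inr i $ Inl j"
      using assms by (simp add: symmetric_mat_def)
    then show ?thesis by (simp add: transpose_def)
  qed
  then show ?thesis
    by (simp add: mkblk_eq_iff ul_block_def)
qed

lemma transpose_mkblk: "transpose (mkblk P Q R) = mkblk (transpose P) Q (transpose R)"
  by (simp add: mkblk_eq_iff transpose_def)

lemma hcat_add_scaleR: "hcat U V + s *\<^sub>R hcat U' V' = hcat (U + s *\<^sub>R U') (V + s *\<^sub>R V')"
  by (simp add: vec_eq_iff_Plus vec_eq_iff)

lemma mkblk_add_scaleR: "mkblk P Q R + s *\<^sub>R mkblk P' Q' R' = mkblk (P + s *\<^sub>R P') (Q + s *\<^sub>R Q') (R + s *\<^sub>R R')"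
  by (simp add: mkblk_eq_iff)

lemma hcat_congruence_nth:
  shows "(transpose (hcat U V) ** M ** hcat U' V') $ Inl i $ Inl j = (transpose U ** M ** U') $ i $ j"
    and "(transpose (hcat U V) ** M ** hcat U' V') $ Inl i $ Inr \<beta> = (transpose U ** M ** V') $ i $ \<beta>"
    and "(transpose (hcat U V) ** M ** hcat U' V') $ Inr \<alpha> $ Inl j = (transpose V ** M ** U') $ \<alpha> $ j"
    and "(transpose (hcat U V) ** M ** hcat U' V') $ Inr \<alpha> $ Inr \<beta> = (transpose V ** M ** V') $ \<alpha> $ \<beta>"
  by (simp_all add: matrix_matrix_mult_def transpose_def)

lemma hcat_zero: "hcat 0 0 = 0"
  by (simp add: vec_eq_iff_Plus vec_eq_iff)

lemma top_rows_transpose_hcat_mul: "top_rows (transpose (hcat U V) ** Y) = transpose U ** Y"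
  by (simp add: top_rows_def vec_eq_iff matrix_matrix_mult_def transpose_def)

lemma top_rows_add: "top_rows (X + Y) = top_rows X + top_rows Y"
  and top_rows_diff: "top_rows (X - Y) = top_rows X - top_rows Y"
  and top_rows_mkblk: "top_rows (mkblk P Q R) = hcat P Q"
  by (simp_all add: top_rows_def vec_eq_iff split_sum_all)

lemma ul_block_add: "ul_block (X + Y) = ul_block X + ul_block Y"
  and ul_block_mkblk: "ul_block (mkblk P Q R) = P"
  by (simp_all add: ul_block_def vec_eq_iff)

lemma ul_block_hcat_congruence: "ul_block (transpose (hcat U V) ** M ** hcat U' V') = transpose U ** M ** U'"
  by (simp add: ul_block_def vec_eq_iff hcat_congruence_nth)

lemma hcat_congruence_eq_mkblk:
  fixes B :: "real^'n1::finite^'n1" and b :: "real^'n2::finite^'n1"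
  assumes "transpose B = B"
  shows "transpose (hcat (mat 1) b) ** B ** hcat (mat 1) b + mkblk 0 0 c = mkblk B (B ** b) (c + transpose b ** B ** b)"
proof -
  have "(transpose b ** B) $ i $ j = (B ** b) $ j $ i" for i j
  proof -
    have "transpose b ** B = transpose (B ** b)"
      by (simp add: matrix_transpose_mul assms)
    then show ?thesis by (simp add: transpose_def)
  qed
  then show ?thesis
    by (simp add: mkblk_eq_iff hcat_congruence_nth)
qed

lemma symmetric_mat_eqI_blocks:
  fixes X Y :: "real^('n1::finite + 'n2::finite)^('n1 + 'n2)"
  assumes "symmetric_mat X" "symmetric_mat Y"
    and "\<And>i j. X $ Inl i $ Inl j = Y $ Inl i $ Inl j" "\<And>i j. X $ Inl i $ Inr j = Y $ Inl i $ Inr j"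
    and "\<And>i j. X $ Inr i $ Inr j = Y $ Inr i $ Inr j"
  shows "X = Y"
  using symmetric_mat_eq_mkblk[OF assms(1)] symmetric_mat_eq_mkblk[OF assms(2)] assms(3-5)
  by (metis (no_types, lifting) ul_block_def vec_eq_iff vec_lambda_beta)

lemma vjoin_surj: obtains x1 x2 where "x = vjoin x1 x2"
proof
  show "x = vjoin (\<chi> i. x $ Inl i) (\<chi> j. x $ Inr j)"
    by (simp add: vjoin_def vec_eq_iff_Plus)
qed

lemma vjoin_line:
  "vjoin p1 (p2 + s *\<^sub>R q) = vjoin p1 p2 + s *\<^sub>R vjoin 0 q"
  "vjoin (x1 + s *\<^sub>R z) x2 = vjoin x1 x2 + s *\<^sub>R vjoin z 0"
  by (simp_all add: vjoin_def vec_eq_iff_Plus)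

lemma open_vjoin_slice:
  assumes "open \<Omega>"
  shows "open {x1. vjoin x1 x2 \<in> \<Omega>}"
proof -
  have lin: "bounded_linear (\<lambda>x1. vjoin x1 (0::real^'n2::finite) :: real^('n1::finite + 'n2))"
    by (simp add: linear_conv_bounded_linear[symmetric] linear_iff vjoin_def vec_eq_iff_Plus)
  have eq: "(\<lambda>x1. vjoin x1 x2) = (\<lambda>x1. vjoin x1 0 + vjoin 0 x2)"
    by (simp add: fun_eq_iff vjoin_def vec_eq_iff_Plus)
  have "isCont (\<lambda>x1. vjoin x1 x2) x1" for x1 :: "real^'n1"
    unfolding eq by (intro continuous_add linear_continuous_at[OF lin] continuous_const)
  then have "open ((\<lambda>x1. vjoin x1 x2) -` \<Omega>)"
    by (rule continuous_open_vimage[OF assms])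
  then show ?thesis by (simp add: vimage_def)
qed

section \<open>Calculus and convexity along lines\<close>

lemma linear_euclidean_expansion:
  fixes L :: "'v::euclidean_space \<Rightarrow> real"
  assumes "linear L"
  shows "L v = (\<Sum>b\<in>Basis. (v \<bullet> b) * L b)"
proof -
  have "L v = L (\<Sum>b\<in>Basis. (v \<bullet> b) *\<^sub>R b)" by (simp add: euclidean_representation)
  also have "\<dots> = (\<Sum>b\<in>Basis. (v \<bullet> b) * L b)"
    using assms by (simp add: linear_sum linear_scale)
  finally show ?thesis .
qed

lemma has_derivative_comp_has_real_derivative:
  fixes c :: "real \<Rightarrow> 'v::real_normed_vector"
  assumes "(\<phi> has_derivative \<phi>') (at (c t))" "(c has_vector_derivative v) (at t)"
  shows "((\<lambda>s. \<phi> (c s)) has_real_derivative \<phi>' v) (at t)"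
proof -
  have "((\<lambda>s. \<phi> (c s)) has_derivative (\<lambda>h. \<phi>' (h *\<^sub>R v))) (at t)"
    using has_derivative_compose[OF assms(2)[unfolded has_vector_derivative_def] assms(1)] .
  moreover have "(\<lambda>h. \<phi>' (h *\<^sub>R v)) = (*) (\<phi>' v)"
    using linear_scale[OF has_derivative_linear[OF assms(1)]] by (auto simp: fun_eq_iff)
  ultimately show ?thesis unfolding has_field_derivative_def by simp
qed

lemma C2_derivs_has_derivative: "C2_derivs f Df D2f S \<Longrightarrow> z \<in> S \<Longrightarrow> (f has_derivative Df z) (at z)"
  by (simp add: C2_derivs_def)

lemma C2_derivs_comp_has_real_derivative:
  fixes c :: "real \<Rightarrow> 'v::euclidean_space"
  assumes "C2_derivs f Df D2f S" "c t \<in> S" "(c has_vector_derivative c1) (at t)"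
  shows "((\<lambda>s. f (c s)) has_real_derivative Df (c t) c1) (at t)"
  using has_derivative_comp_has_real_derivative[OF C2_derivs_has_derivative[OF assms(1,2)] assms(3)] .

lemma has_real_derivative_linear_apply:
  fixes v :: "real \<Rightarrow> 'v::euclidean_space"
  assumes lin: "\<forall>\<^sub>F s in at t. linear (L s)" and lin_t: "linear (L t)"
    and dL: "\<And>h. ((\<lambda>s. L s h) has_real_derivative L' h) (at t)"
    and dv: "(v has_vector_derivative v') (at t)"
  shows "((\<lambda>s. L s (v s)) has_real_derivative L' (v t) + L t v') (at t)"
proof -
  \<comment> \<open>expanding \<open>v s - v t\<close> in a basis separates the two arguments of \<open>L\<close>\<close>
  define g where "g s = L s (v t) + (\<Sum>b\<in>Basis. ((v s - v t) \<bullet> b) * L s b)" for s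
  from lin have ev: "\<forall>\<^sub>F s in at t. L s (v s) = g s"
  proof eventually_elim
    case (elim s)
    have "L s (v s) = L s (v t) + L s (v s - v t)"
      using linear_diff[OF elim, of "v s" "v t"] by simp
    then show ?case
      unfolding g_def using linear_euclidean_expansion[OF elim, of "v s - v t"] by simp
  qed
  have "((\<lambda>s. (v s - v t) \<bullet> b) has_real_derivative v' \<bullet> b) (at t)" for b :: 'v
    using bounded_linear.has_vector_derivative[OF bounded_linear_inner_left
        has_vector_derivative_diff[OF dv has_vector_derivative_const]]
    by (simp add: has_real_derivative_iff_has_vector_derivative)
  then have "(g has_real_derivative
      L' (v t) + (\<Sum>b\<in>Basis. (v' \<bullet> b) * L t b + L' b * ((v t - v t) \<bullet> b))) (at t)"
    unfolding g_def[abs_def] by (intro DERIV_add DERIV_sum DERIV_mult dL)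
  then have "(g has_real_derivative L' (v t) + L t v') (at t)"
    using linear_euclidean_expansion[OF lin_t, of v'] by simp
  moreover have "L t (v t) = g t" unfolding g_def by simp
  ultimately show ?thesis
    using has_field_derivative_cong_eventually[OF ev] by simp
qed

lemma C2_derivs_comp_has_real_derivative2:
  fixes c c1 :: "real \<Rightarrow> 'v::euclidean_space"
  assumes C2: "C2_derivs f Df D2f S" and ct: "c t \<in> S"
    and c1: "(c has_vector_derivative c1 t) (at t)" and c2: "(c1 has_vector_derivative c2) (at t)"
  shows "((\<lambda>s. Df (c s) (c1 s)) has_real_derivative D2f (c t) (c1 t) (c1 t) + Df (c t) c2) (at t)"
proof (rule has_real_derivative_linear_apply[where L' = "\<lambda>h. D2f (c t) h (c1 t)", OF _ _ _ c2])
  have "(c \<longlongrightarrow> c t) (at t)"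
    using has_vector_derivative_continuous[OF c1] by (simp add: isCont_def)
  then have "\<forall>\<^sub>F s in at t. c s \<in> S"
    using C2 ct unfolding C2_derivs_def by (blast intro: topological_tendstoD)
  then show "\<forall>\<^sub>F s in at t. linear (Df (c s))"
    by eventually_elim (rule has_derivative_linear[OF C2_derivs_has_derivative[OF C2]])
  show "linear (Df (c t))"
    by (rule has_derivative_linear[OF C2_derivs_has_derivative[OF C2 ct]])
  show "((\<lambda>s. Df (c s) h) has_real_derivative D2f (c t) h (c1 t)) (at t)" for h
  proof -
    have "((\<lambda>w. Df w h) has_derivative D2f (c t) h) (at (c t))"
      using C2 ct unfolding C2_derivs_def by blast
    from has_derivative_comp_has_real_derivative[OF this c1] show ?thesis .
  qed
qed

lemma has_vector_derivative_line: "((\<lambda>s. b + s *\<^sub>R (\<beta>::'a::real_normed_vector)) has_vector_derivative \<beta>) (at t)"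
  by (auto intro!: derivative_eq_intros)

lemma convex_on_along_line:
  fixes f :: "'a::real_vector \<Rightarrow> real"
  assumes f: "convex_on S f" and I: "convex I" and line: "\<And>s. s \<in> I \<Longrightarrow> w + s *\<^sub>R d \<in> S"
  shows "convex_on I (\<lambda>s. f (w + s *\<^sub>R d))"
proof (rule convex_onI[OF _ I])
  fix t x y :: real
  assume "t > 0" "t < 1" "x \<in> I" "y \<in> I"
  then show "f (w + ((1 - t) *\<^sub>R x + t *\<^sub>R y) *\<^sub>R d) \<le> (1 - t) * f (w + x *\<^sub>R d) + t * f (w + y *\<^sub>R d)"
    using convex_onD[OF f, of t "w + x *\<^sub>R d" "w + y *\<^sub>R d"] line
    by (simp add: algebra_simps)
qed

lemma convex_on_if_convex_on_segments:
  fixes f :: "'a::real_vector \<Rightarrow> real"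
  assumes S: "convex S" and seg: "\<And>v w. v \<in> S \<Longrightarrow> w \<in> S \<Longrightarrow> convex_on {0..1} (\<lambda>s. f (v + s *\<^sub>R (w - v)))"
  shows "convex_on S f"
proof (rule convex_onI[OF _ S])
  fix t :: real and v w :: 'a
  assume "t > 0" "t < 1" "v \<in> S" "w \<in> S"
  moreover have "(1 - t) *\<^sub>R v + t *\<^sub>R w = v + t *\<^sub>R (w - v)" by (simp add: algebra_simps)
  ultimately show "f ((1 - t) *\<^sub>R v + t *\<^sub>R w) \<le> (1 - t) * f v + t * f w"
    using convex_onD_Icc[OF seg, of v w t] by simp
qed

lemma convex_on_deriv2_nonneg:
  fixes \<phi> \<phi>' :: "real \<Rightarrow> real"
  assumes cv: "convex_on {a<..<b} \<phi>" and t: "t \<in> {a<..<b}"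
    and d1: "\<And>s. s \<in> {a<..<b} \<Longrightarrow> (\<phi> has_real_derivative \<phi>' s) (at s)"
    and d2: "(\<phi>' has_real_derivative L) (at t)"
  shows "L \<ge> 0"
proof (rule ccontr)
  assume "\<not> L \<ge> 0"
  then obtain e where e: "e > 0" "\<And>h. h > 0 \<Longrightarrow> h < e \<Longrightarrow> \<phi>' t > \<phi>' (t + h)"
    using DERIV_neg_dec_right[OF d2] by (metis not_le)
  have tangent: "\<phi> x - \<phi> c \<ge> \<phi>' c * (x - c)" if "c \<in> {a<..<b}" "x \<in> {a<..<b}" for c x
    using that d1[OF that(1)]
    by (intro convex_on_imp_above_tangent[OF cv]) (auto simp: interior_open has_field_derivative_at_within)
  \<comment> \<open>the tangent inequality at two points makes \<open>\<phi>'\<close> monotone\<close>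
  have mono: "\<phi>' x \<le> \<phi>' y" if "x \<in> {a<..<b}" "y \<in> {a<..<b}" "x < y" for x y
  proof -
    have "(\<phi>' x - \<phi>' y) * (y - x) \<le> 0"
      using tangent[of x y] tangent[of y x] that by (simp add: algebra_simps)
    then show ?thesis using that(3) by (simp add: mult_le_0_iff)
  qed
  define h where "h = min e (b - t) / 2"
  have "h > 0" "h < e" "t + h \<in> {a<..<b}" using e(1) t unfolding h_def by (auto simp: min_def field_simps)
  then show False
    using e(2) mono[of t "t + h"] t by fastforce
qed

lemma convex_on_cong:
  assumes "\<And>x. x \<in> A \<Longrightarrow> f x = g x"
  shows "convex_on A f \<longleftrightarrow> convex_on A g"
  using assms by (auto simp: convex_on_def convexD)

lemma eventually_nhds_line_in_open:
  fixes w d :: "'a::real_normed_vector"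
  assumes "open S" "w \<in> S"
  shows "\<forall>\<^sub>F s in nhds 0. w + s *\<^sub>R d \<in> S"
proof -
  have "isCont (\<lambda>s. w + s *\<^sub>R d) 0" by (intro continuous_intros)
  then have "((\<lambda>s. w + s *\<^sub>R d) \<longlongrightarrow> w) (nhds 0)"
    using tendsto_at_iff_tendsto_nhds[of "\<lambda>s. w + s *\<^sub>R d" 0] by (simp add: isCont_def)
  then show ?thesis using assms by (rule topological_tendstoD)
qed

section \<open>The change of variables\<close>

text \<open>The matrix
  \<open>lift_mat a b c\<close> is the block matrix of the statement (\<open>hcat_congruence_eq_mkblk\<close>), written as
  \<open>E\<^sup>T a\<^sup>-\<^sup>1 E + diag(0, c)\<close> with \<open>E = [I | b]\<close> so that it can be differentiated by the product rule.\<close>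

type_synonym ('n1,'n2) gpt =
  "(real^'n1^'n1) \<times> (real^'n2^'n1) \<times> (real^'n2^'n2) \<times> (real^'n2) \<times> real \<times> (real^'n1)"

definition lift_mat :: "real^'n1::finite^'n1 \<Rightarrow> real^'n2::finite^'n1 \<Rightarrow> real^'n2^'n2
    \<Rightarrow> real^('n1 + 'n2)^('n1 + 'n2)" where
  "lift_mat a b c = transpose (hcat (mat 1) b) ** matrix_inv a ** hcat (mat 1) b + mkblk 0 0 c"

definition lift_mat_deriv :: "real^'n1::finite^'n1 \<Rightarrow> real^'n2::finite^'n1 \<Rightarrow>
    real^'n1^'n1 \<Rightarrow> real^'n2^'n1 \<Rightarrow> real^'n2^'n2 \<Rightarrow> real^('n1 + 'n2)^('n1 + 'n2)" where
  "lift_mat_deriv a b \<alpha> \<beta> \<gamma> =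
     transpose (hcat 0 \<beta>) ** matrix_inv a ** hcat (mat 1) b
     - transpose (hcat (mat 1) b) ** (matrix_inv a ** \<alpha> ** matrix_inv a) ** hcat (mat 1) b
     + transpose (hcat (mat 1) b) ** matrix_inv a ** hcat 0 \<beta> + mkblk 0 0 \<gamma>"

lemma ul_block_lift_mat: "ul_block (lift_mat a b c) = matrix_inv a"
  by (simp add: lift_mat_def ul_block_add ul_block_hcat_congruence ul_block_mkblk transpose_mat)

lemma symmetric_lift_mat:
  assumes "pos_def a" "symmetric_mat c"
  shows "symmetric_mat (lift_mat a b c)"
  using assms transpose_matrix_inv_symmetric[OF pos_def_invertible[OF assms(1)]]
  unfolding lift_mat_def symmetric_mat_def pos_def_def
  by (simp add: matrix_algebra_simps transpose_mkblk matrix_mul_assoc)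

lemma symmetric_lift_mat_deriv:
  assumes "pos_def a" "symmetric_mat \<alpha>" "symmetric_mat \<gamma>"
  shows "symmetric_mat (lift_mat_deriv a b \<alpha> \<beta> \<gamma>)"
  using assms transpose_matrix_inv_symmetric[OF pos_def_invertible[OF assms(1)]]
  unfolding lift_mat_deriv_def symmetric_mat_def pos_def_def
  by (simp add: matrix_algebra_simps transpose_mkblk matrix_mul_assoc algebra_simps)

lemma lift_mat_nth:
  "lift_mat a b c $ Inl i $ Inl j = matrix_inv a $ i $ j"
  "lift_mat a b c $ Inl i $ Inr \<beta> = (matrix_inv a ** b) $ i $ \<beta>"
  "lift_mat a b c $ Inr \<alpha> $ Inr \<beta> = (c + transpose b ** matrix_inv a ** b) $ \<alpha> $ \<beta>"
  by (simp_all add: lift_mat_def hcat_congruence_nth)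

lemma lift_mat_deriv_nth:
  "lift_mat_deriv a b \<alpha> \<beta> \<gamma> $ Inl i $ Inl j = (- (matrix_inv a ** \<alpha> ** matrix_inv a)) $ i $ j"
  "lift_mat_deriv a b \<alpha> \<beta> \<gamma> $ Inl i $ Inr k =
     (matrix_inv a ** \<beta> - matrix_inv a ** \<alpha> ** matrix_inv a ** b) $ i $ k"
  "lift_mat_deriv a b \<alpha> \<beta> \<gamma> $ Inr l $ Inr k =
     (\<gamma> + transpose \<beta> ** matrix_inv a ** b + transpose b ** matrix_inv a ** \<beta>
      - transpose b ** (matrix_inv a ** \<alpha> ** matrix_inv a) ** b) $ l $ k"
  by (simp_all add: lift_mat_deriv_def hcat_congruence_nth transpose_zero matrix_mul_zero_left
      matrix_mul_zero_right)

lemma top_rows_lift_mat_deriv: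
  "top_rows (lift_mat_deriv a b \<alpha> \<beta> \<gamma>) =
     matrix_inv a ** hcat 0 \<beta> - (matrix_inv a ** \<alpha> ** matrix_inv a) ** hcat (mat 1) b"
  by (simp add: lift_mat_deriv_def top_rows_add top_rows_diff top_rows_transpose_hcat_mul
      top_rows_mkblk hcat_zero transpose_zero matrix_mul_zero_left matrix_mul_assoc[symmetric])

lemma hcat_line: "hcat (mat 1) (b + s *\<^sub>R \<beta>) = hcat (mat 1) b + s *\<^sub>R hcat 0 \<beta>"
  by (simp add: hcat_add_scaleR)

lemma mkblk_line: "mkblk 0 0 (c + s *\<^sub>R \<gamma>) = mkblk 0 0 c + s *\<^sub>R mkblk 0 0 \<gamma>"
  by (simp add: mkblk_add_scaleR)

lemma has_vector_derivative_lift_mat: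
  assumes "invertible (a + t *\<^sub>R \<alpha>)"
  shows "((\<lambda>s. lift_mat (a + s *\<^sub>R \<alpha>) (b + s *\<^sub>R \<beta>) (c + s *\<^sub>R \<gamma>)) has_vector_derivative
      lift_mat_deriv (a + t *\<^sub>R \<alpha>) (b + t *\<^sub>R \<beta>) \<alpha> \<beta> \<gamma>) (at t)"
  unfolding lift_mat_def hcat_line mkblk_line
  apply (rule has_vector_derivative_eq_rhs)
   apply (rule has_vector_derivative_line has_vector_derivative_matrix_inv[OF has_vector_derivative_line assms]
      has_vector_derivative_add has_vector_derivative_matrix_mul has_vector_derivative_transpose)+
  apply (simp add: lift_mat_deriv_def hcat_line matrix_algebra_simps algebra_simps)
  done

text \<open>The second derivative is \<open>2 R\<^sup>T a R\<close> with \<open>R\<close> the top block row of the first one: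
  this is where the term \<open>2 \<Sum> F\<^sup>a\<^sup>b a\<^sup>k\<^sup>l X\<^sub>k\<^sub>a X\<^sub>l\<^sub>b\<close> of the quadratic form comes from.\<close>

lemma has_vector_derivative_lift_mat_deriv:
  fixes b \<beta> :: "real^'n2::finite^'n1::finite" and \<gamma> :: "real^'n2^'n2"
  assumes inv: "invertible (a + t *\<^sub>R \<alpha>)" and sym: "transpose (a + t *\<^sub>R \<alpha>) = a + t *\<^sub>R \<alpha>"
    and sym\<alpha>: "transpose \<alpha> = \<alpha>"
  defines "R \<equiv> top_rows (lift_mat_deriv (a + t *\<^sub>R \<alpha>) (b + t *\<^sub>R \<beta>) \<alpha> \<beta> \<gamma>)"
  shows "((\<lambda>s. lift_mat_deriv (a + s *\<^sub>R \<alpha>) (b + s *\<^sub>R \<beta>) \<alpha> \<beta> \<gamma>) has_vector_derivative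
      2 *\<^sub>R (transpose R ** (a + t *\<^sub>R \<alpha>) ** R)) (at t)"
proof -
  define A where "A = a + t *\<^sub>R \<alpha>"
  define B where "B = matrix_inv A"
  have AB: "A ** B = mat 1" and BA: "B ** A = mat 1"
    using inv by (simp_all add: A_def B_def matrix_inv_right matrix_inv_left)
  have symB: "transpose B = B"
    using transpose_matrix_inv_symmetric[OF inv sym] by (simp add: A_def B_def)
  define E where "E = hcat (mat 1) (b + t *\<^sub>R \<beta>)"
  define E' :: "real^('n1 + 'n2)^'n1" where "E' = hcat 0 \<beta>"
  define D where "D = transpose E ** (2 *\<^sub>R (B ** \<alpha> ** B ** \<alpha> ** B)) ** E
      - 2 *\<^sub>R (transpose E' ** (B ** \<alpha> ** B) ** E) - 2 *\<^sub>R (transpose E ** (B ** \<alpha> ** B) ** E')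
      + 2 *\<^sub>R (transpose E' ** B ** E')"
  have deriv: "((\<lambda>s. lift_mat_deriv (a + s *\<^sub>R \<alpha>) (b + s *\<^sub>R \<beta>) \<alpha> \<beta> \<gamma>) has_vector_derivative D) (at t)"
    unfolding lift_mat_deriv_def hcat_line
    apply (rule has_vector_derivative_eq_rhs)
     apply (rule has_vector_derivative_line has_vector_derivative_const
        has_vector_derivative_matrix_inv[OF has_vector_derivative_line inv]
        has_vector_derivative_add has_vector_derivative_diff
        has_vector_derivative_matrix_mul has_vector_derivative_transpose)+
    apply (simp add: D_def E_def E'_def A_def[symmetric] B_def[symmetric] hcat_line matrix_algebra_simps
        algebra_simps matrix_mul_assoc[symmetric] numeral_mult_matrix)
    done
  have R_eq: "R = B ** E' - (B ** \<alpha> ** B) ** E"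
    unfolding R_def top_rows_lift_mat_deriv A_def B_def E_def E'_def ..
  have D_eq: "D = 2 *\<^sub>R (transpose R ** A ** R)"
    unfolding D_def R_eq
    by (simp add: matrix_algebra_simps matrix_mul_assoc[symmetric] matrix_mul_cancel_left[OF AB]
        matrix_mul_cancel_left[OF BA] symB sym\<alpha> algebra_simps numeral_mult_matrix)
  show ?thesis
    using deriv unfolding D_eq A_def .
qed

definition lift :: "real^'n1::finite \<Rightarrow> real^'n2::finite \<Rightarrow> ('n1,'n2) gpt \<Rightarrow> ('n1,'n2) pt" where
  "lift p1 x2 = (\<lambda>(a, b, c, p2, u, x1). (lift_mat a b c, vjoin p1 p2, u, vjoin x1 x2))"

definition lift_deriv :: "('n1::finite,'n2::finite) gpt \<Rightarrow> ('n1,'n2) gpt \<Rightarrow> ('n1,'n2) pt" where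
  "lift_deriv = (\<lambda>(a, b, c, p2, u, x1) (\<alpha>, \<beta>, \<gamma>, q, y, z).
     (lift_mat_deriv a b \<alpha> \<beta> \<gamma>, vjoin 0 q, y, vjoin z 0))"

lemma Gtrans_eq_lift:
  assumes "pos_def a" "symmetric_mat c"
  shows "Gtrans F p1 x2 (a, b, c, p2, u, x1) = sym_ext F (lift p1 x2 (a, b, c, p2, u, x1))"
proof -
  have "transpose (matrix_inv a) = matrix_inv a"
    using assms(1) transpose_matrix_inv_symmetric[OF pos_def_invertible]
    unfolding pos_def_def symmetric_mat_def by blast
  moreover have "symm (lift_mat a b c) = lift_mat a b c"
    using symmetric_lift_mat[OF assms] unfolding symm_def symmetric_mat_def by (simp add: scaleR_2[symmetric])
  ultimately show ?thesis
    unfolding Gtrans_def sym_ext_def lift_def by (simp add: lift_mat_def hcat_congruence_eq_mkblk)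
qed

text \<open>The matrix \<open>M\<^sub>a\<^sub>b = \<Sum>\<^sub>k\<^sub>l X\<^sub>k\<^sub>a a\<^sup>k\<^sup>l X\<^sub>l\<^sub>b\<close> paired with \<open>DF\<close> in \<open>quad_form\<close>.\<close>

definition top_quad :: "real^('n1::finite + 'n2::finite)^('n1 + 'n2) \<Rightarrow> real^('n1 + 'n2)^('n1 + 'n2)
    \<Rightarrow> real^('n1 + 'n2)^('n1 + 'n2)" where
  "top_quad A X = transpose (top_rows X) ** matrix_inv (ul_block A) ** top_rows X"

lemma quad_form_eq:
  "quad_form DF D2F (A, p, u, x) X X2 Y Z =
     D2F (A, p, u, x) (X, vjoin 0 X2, Y, vjoin Z 0) (X, vjoin 0 X2, Y, vjoin Z 0)
     + 2 * DF (A, p, u, x) (top_quad A X, 0, 0, 0)"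
proof -
  have "(\<chi> a b. \<Sum>k\<in>UNIV. \<Sum>l\<in>UNIV. X $ Inl k $ a * matrix_inv (ul_block A) $ k $ l * X $ Inl l $ b)
      = top_quad A X"
    by (simp add: top_quad_def vec_eq_iff matrix_matrix_mult_def transpose_def top_rows_def sum_distrib_right)
       (intro allI sum.swap)
  then show ?thesis
    by (simp add: quad_form_def Let_def)
qed

lemma has_vector_derivative_lift:
  assumes "invertible (a + t *\<^sub>R \<alpha>)"
  shows "((\<lambda>s. lift p1 x2 ((a, b, c, p2, u, x1) + s *\<^sub>R (\<alpha>, \<beta>, \<gamma>, q, y, z))) has_vector_derivative
      lift_deriv ((a, b, c, p2, u, x1) + t *\<^sub>R (\<alpha>, \<beta>, \<gamma>, q, y, z)) (\<alpha>, \<beta>, \<gamma>, q, y, z)) (at t)"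
  using has_vector_derivative_lift_mat[OF assms]
  by (simp add: lift_def lift_deriv_def vjoin_line)
     (intro has_vector_derivative_Pair has_vector_derivative_line
       has_vector_derivative_line[of u y, unfolded real_scaleR_def])

lemma has_vector_derivative_lift_deriv:
  assumes "pos_def (a + t *\<^sub>R \<alpha>)" "symmetric_mat \<alpha>"
    and w: "w = (a, b, c, p2, u, x1)" and d: "d = (\<alpha>, \<beta>, \<gamma>, q, y, z)"
  shows "((\<lambda>s. lift_deriv (w + s *\<^sub>R d) d) has_vector_derivative
      (2 *\<^sub>R top_quad (fst (lift p1 x2 (w + t *\<^sub>R d))) (fst (lift_deriv (w + t *\<^sub>R d) d)), 0, 0, 0)) (at t)"
proof -
  have inv: "invertible (a + t *\<^sub>R \<alpha>)" by (rule pos_def_invertible[OF assms(1)])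
  have "transpose (a + t *\<^sub>R \<alpha>) = a + t *\<^sub>R \<alpha>" "transpose \<alpha> = \<alpha>"
    using assms(1,2) unfolding pos_def_def symmetric_mat_def by auto
  from has_vector_derivative_lift_mat_deriv[OF inv this, of b \<beta> \<gamma>] show ?thesis
    by (simp add: w d lift_def lift_deriv_def top_quad_def ul_block_lift_mat matrix_inv_matrix_inv[OF inv])
       (intro has_vector_derivative_Pair has_vector_derivative_const)
qed

lemma lift_line_derivatives:
  fixes F :: "real^('n1::finite + 'n2::finite)^('n1 + 'n2) \<Rightarrow> real^('n1 + 'n2) \<Rightarrow> real
               \<Rightarrow> real^('n1 + 'n2) \<Rightarrow> real"
  assumes C2: "C2_derivs (sym_ext F) DF D2F (UNIV \<times> UNIV \<times> UNIV \<times> \<Omega>)"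
    and w: "w = (a, b, c, p2, u, x1)" and d: "d = (\<alpha>, \<beta>, \<gamma>, q, y, z)"
    and pd: "pos_def (a + t *\<^sub>R \<alpha>)" and sym: "symmetric_mat \<alpha>"
    and x: "vjoin (x1 + t *\<^sub>R z) x2 \<in> \<Omega>"
  shows "((\<lambda>s. sym_ext F (lift p1 x2 (w + s *\<^sub>R d))) has_real_derivative
           DF (lift p1 x2 (w + t *\<^sub>R d)) (lift_deriv (w + t *\<^sub>R d) d)) (at t)"
    and "((\<lambda>s. DF (lift p1 x2 (w + s *\<^sub>R d)) (lift_deriv (w + s *\<^sub>R d) d)) has_real_derivative
           quad_form DF D2F (lift p1 x2 (w + t *\<^sub>R d)) (fst (lift_deriv (w + t *\<^sub>R d) d)) q y z) (at t)"
proof -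
  let ?z = "lift p1 x2 (w + t *\<^sub>R d)" and ?h = "lift_deriv (w + t *\<^sub>R d) d"
  have mem: "?z \<in> UNIV \<times> UNIV \<times> UNIV \<times> \<Omega>"
    using x by (simp add: w d lift_def)
  have deriv: "((\<lambda>s. lift p1 x2 (w + s *\<^sub>R d)) has_vector_derivative ?h) (at t)"
    using has_vector_derivative_lift[OF pos_def_invertible[OF pd]] by (simp add: w d)
  show "((\<lambda>s. sym_ext F (lift p1 x2 (w + s *\<^sub>R d))) has_real_derivative DF ?z ?h) (at t)"
    by (rule C2_derivs_comp_has_real_derivative[OF C2 mem deriv])
  have lin: "linear (DF ?z)"
    using has_derivative_linear[OF C2_derivs_has_derivative[OF C2 mem]] .
  have quad: "D2F ?z ?h ?h + DF ?z (2 *\<^sub>R top_quad (fst ?z) (fst ?h), 0, 0, 0) = quad_form DF D2F ?z (fst ?h) q y z"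
    using linear_scale[OF lin, of 2 "(top_quad (fst ?z) (fst ?h), 0, 0, 0)"]
    by (simp add: w d lift_def lift_deriv_def quad_form_eq)
  show "((\<lambda>s. DF (lift p1 x2 (w + s *\<^sub>R d)) (lift_deriv (w + s *\<^sub>R d) d)) has_real_derivative
           quad_form DF D2F ?z (fst ?h) q y z) (at t)"
    using C2_derivs_comp_has_real_derivative2[OF C2 mem deriv
        has_vector_derivative_lift_deriv[where ?p1.0 = p1 and ?x2.0 = x2, OF pd sym w d]]
    unfolding quad .
qed

lemma lift_mat_surj:
  fixes A :: "real^('n1::finite + 'n2::finite)^('n1 + 'n2)"
  assumes sA: "symmetric_mat A" and pd: "pos_def (ul_block A)"
  obtains a b c where "pos_def a" "symmetric_mat c" "lift_mat a b c = A"
proof -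
  define P where "P = ul_block A"
  define Q :: "real^'n2^'n1" where "Q = (\<chi> i j. A $ Inl i $ Inr j)"
  define R :: "real^'n2^'n2" where "R = (\<chi> i j. A $ Inr i $ Inr j)"
  have A: "A = mkblk P Q R"
    using symmetric_mat_eq_mkblk[OF sA] by (simp add: P_def Q_def R_def)
  then have "transpose R = R"
    using sA by (simp add: symmetric_mat_def transpose_mkblk mkblk_inject)
  have pdP: "pos_def P" and sP: "transpose P = P"
    using pd unfolding P_def pos_def_def symmetric_mat_def by auto
  have invP: "invertible P" by (rule pos_def_invertible[OF pdP])
  define a where "a = matrix_inv P"
  have Pa: "P ** a = mat 1" and sa: "transpose a = a" and inv_a: "matrix_inv a = P"
    using invP transpose_matrix_inv_symmetric[OF invP sP] matrix_inv_matrix_inv[OF invP]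
    by (simp_all add: a_def matrix_inv_right)
  define b where "b = a ** Q"
  define c where "c = R - transpose Q ** a ** Q"
  show ?thesis
  proof
    show "pos_def a" unfolding a_def by (rule pos_def_matrix_inv[OF pdP])
    show sc: "symmetric_mat c"
      unfolding symmetric_mat_def c_def
      using \<open>transpose R = R\<close> by (simp add: matrix_algebra_simps matrix_mul_assoc sa)
    have "P ** b = Q" "c + transpose b ** P ** b = R"
      by (simp_all add: b_def c_def matrix_algebra_simps matrix_mul_assoc[symmetric]
          matrix_mul_cancel_left[OF Pa] sa Pa)
    then show "lift_mat a b c = A"
      using sA \<open>pos_def a\<close> sc
      by (intro symmetric_mat_eqI_blocks symmetric_lift_mat) (simp_all add: lift_mat_nth inv_a A)
  qed
qed

lemma lift_mat_deriv_surj: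
  fixes X :: "real^('n1::finite + 'n2::finite)^('n1 + 'n2)"
  assumes pd: "pos_def a" and sX: "symmetric_mat X"
  obtains \<alpha> \<beta> \<gamma> where "symmetric_mat \<alpha>" "symmetric_mat \<gamma>" "lift_mat_deriv a b \<alpha> \<beta> \<gamma> = X"
proof -
  define U where "U = ul_block X"
  define V :: "real^'n2^'n1" where "V = (\<chi> i j. X $ Inl i $ Inr j)"
  define W :: "real^'n2^'n2" where "W = (\<chi> i j. X $ Inr i $ Inr j)"
  have X: "X = mkblk U V W"
    using symmetric_mat_eq_mkblk[OF sX] by (simp add: U_def V_def W_def)
  then have sU: "transpose U = U" and sW: "transpose W = W"
    using sX by (simp_all add: symmetric_mat_def transpose_mkblk mkblk_inject)
  define P where "P = matrix_inv a"
  have inv: "invertible a" by (rule pos_def_invertible[OF pd])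
  have Pa: "P ** a = mat 1" and aP: "a ** P = mat 1" and sP: "transpose P = P"
    using inv pd transpose_matrix_inv_symmetric[OF inv]
    by (simp_all add: P_def matrix_inv_right matrix_inv_left pos_def_def symmetric_mat_def)
  have sa: "transpose a = a" using pd by (simp add: pos_def_def symmetric_mat_def)
  define \<alpha> where "\<alpha> = - (a ** U ** a)"
  define \<beta> where "\<beta> = a ** (V - U ** b)"
  define \<gamma> where "\<gamma> = W - (transpose \<beta> ** P ** b + transpose b ** U ** b + transpose b ** P ** \<beta>)"
  show ?thesis
  proof
    show s\<alpha>: "symmetric_mat \<alpha>" and s\<gamma>: "symmetric_mat \<gamma>"
      unfolding symmetric_mat_def \<alpha>_def \<gamma>_def
      by (simp_all add: matrix_algebra_simps matrix_mul_assoc sa sU sW sP algebra_simps)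
    have "- (P ** \<alpha> ** P) = U" "P ** \<beta> - P ** \<alpha> ** P ** b = V"
      "\<gamma> + transpose \<beta> ** P ** b + transpose b ** P ** \<beta> - transpose b ** (P ** \<alpha> ** P) ** b = W"
      by (simp_all add: \<alpha>_def \<beta>_def \<gamma>_def matrix_algebra_simps matrix_mul_assoc[symmetric]
          matrix_mul_cancel_left[OF Pa] matrix_mul_cancel_left[OF aP] Pa aP)
    then show "lift_mat_deriv a b \<alpha> \<beta> \<gamma> = X"
      using sX pd s\<alpha> s\<gamma>
      by (intro symmetric_mat_eqI_blocks symmetric_lift_mat_deriv)
         (simp_all add: lift_mat_deriv_nth P_def[symmetric] X)
  qed
qed

lemma convex_pos_def_symmetric:
  "convex ({(a, b, c, p2, u, x1). pos_def a \<and> symmetric_mat c} :: ('n1::finite,'n2::finite) gpt set)"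
proof (rule convexI)
  fix v w :: "('n1,'n2) gpt" and s t :: real
  assume v: "v \<in> {(a, b, c, p2, u, x1). pos_def a \<and> symmetric_mat c}"
    and w: "w \<in> {(a, b, c, p2, u, x1). pos_def a \<and> symmetric_mat c}"
    and st: "0 \<le> s" "0 \<le> t" "s + t = 1"
  obtain a b c p2 u x1 where v_eq: "v = (a, b, c, p2, u, x1)" by (cases v) auto
  obtain a' b' c' p2' u' x1' where w_eq: "w = (a', b', c', p2', u', x1')" by (cases w) auto
  have s: "s = 1 - t" using st by simp
  show "s *\<^sub>R v + t *\<^sub>R w \<in> {(a, b, c, p2, u, x1). pos_def a \<and> symmetric_mat c}"
    using v w st pos_def_convex_combination[of a a' t]
    by (simp add: s v_eq w_eq symmetric_mat_def matrix_algebra_simps)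
qed

lemma dist_last_le_dist_gpt:
  "dist x1 x1' \<le> dist ((a, b, c, p2, u, x1) :: ('n1::finite,'n2::finite) gpt) (a', b', c', p2', u', x1')"
  using dist_snd_le[of "(u, x1)" "(u', x1')"] dist_snd_le[of "(p2, u, x1)" "(p2', u', x1')"]
    dist_snd_le[of "(c, p2, u, x1)" "(c', p2', u', x1')"]
    dist_snd_le[of "(b, c, p2, u, x1)" "(b', c', p2', u', x1')"]
    dist_snd_le[of "(a, b, c, p2, u, x1)" "(a', b', c', p2', u', x1')"]
  unfolding snd_conv by linarith

lemma convex_on_Gtrans_along_line:
  fixes F :: "real^('n1::finite + 'n2::finite)^('n1 + 'n2) \<Rightarrow> real^('n1 + 'n2) \<Rightarrow> real
               \<Rightarrow> real^('n1 + 'n2) \<Rightarrow> real"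
  assumes C2: "C2_derivs (sym_ext F) DF D2F (UNIV \<times> UNIV \<times> UNIV \<times> \<Omega>)"
    and nonneg: "\<forall>A p u x. symmetric_mat A \<and> x \<in> \<Omega> \<and> pos_def (ul_block A) \<longrightarrow>
            (\<forall>X X2 Y Z. symmetric_mat X \<longrightarrow> quad_form DF D2F (A, p, u, x) X X2 Y Z \<ge> 0)"
    and v: "v = (a, b, c, p2, u, x1)" and d: "d = (\<alpha>, \<beta>, \<gamma>, q, y, z)"
    and sym: "symmetric_mat \<alpha>" "symmetric_mat \<gamma>"
    and I: "convex I" and dom: "\<And>s. s \<in> I \<Longrightarrow> v + s *\<^sub>R d \<in> Gdom \<Omega> x2"
  shows "convex_on I (\<lambda>s. Gtrans F p1 x2 (v + s *\<^sub>R d))"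
proof -
  have in_dom: "pos_def (a + s *\<^sub>R \<alpha>) \<and> symmetric_mat (c + s *\<^sub>R \<gamma>) \<and> vjoin (x1 + s *\<^sub>R z) x2 \<in> \<Omega>"
    if "s \<in> I" for s
    using dom[OF that] by (simp add: Gdom_def v d)
  define \<phi> where "\<phi> s = sym_ext F (lift p1 x2 (v + s *\<^sub>R d))" for s
  have "convex_on I \<phi>"
  proof (rule f''_ge0_imp_convex[OF I])
    fix s assume s: "s \<in> I"
    note derivs = lift_line_derivatives[OF C2 v d conjunct1[OF in_dom[OF s]] sym(1)
        conjunct2[OF conjunct2[OF in_dom[OF s]]]]
    show "(\<phi> has_real_derivative DF (lift p1 x2 (v + s *\<^sub>R d)) (lift_deriv (v + s *\<^sub>R d) d)) (at s)"
      unfolding \<phi>_def[abs_def] by (rule derivs(1))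
    show "((\<lambda>s. DF (lift p1 x2 (v + s *\<^sub>R d)) (lift_deriv (v + s *\<^sub>R d) d)) has_real_derivative
        quad_form DF D2F (lift p1 x2 (v + s *\<^sub>R d)) (fst (lift_deriv (v + s *\<^sub>R d) d)) q y z) (at s)"
      by (rule derivs(2))
    show "quad_form DF D2F (lift p1 x2 (v + s *\<^sub>R d)) (fst (lift_deriv (v + s *\<^sub>R d) d)) q y z \<ge> 0"
      using nonneg in_dom[OF s] sym
      by (simp add: v d lift_def lift_deriv_def ul_block_lift_mat symmetric_lift_mat
          pos_def_matrix_inv symmetric_lift_mat_deriv)
  qed
  then show ?thesis
    using in_dom by (subst convex_on_cong) (auto simp: \<phi>_def v d Gtrans_eq_lift)
qed

lemma locally_convex_Gtrans_if_quad_form_nonneg: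
  fixes F :: "real^('n1::finite + 'n2::finite)^('n1 + 'n2) \<Rightarrow> real^('n1 + 'n2) \<Rightarrow> real
               \<Rightarrow> real^('n1 + 'n2) \<Rightarrow> real"
  assumes "open \<Omega>" and C2: "C2_derivs (sym_ext F) DF D2F (UNIV \<times> UNIV \<times> UNIV \<times> \<Omega>)"
    and nonneg: "\<forall>A p u x. symmetric_mat A \<and> x \<in> \<Omega> \<and> pos_def (ul_block A) \<longrightarrow>
            (\<forall>X X2 Y Z. symmetric_mat X \<longrightarrow> quad_form DF D2F (A, p, u, x) X X2 Y Z \<ge> 0)"
  shows "locally_convex_on (Gdom \<Omega> x2) (Gtrans F p1 x2)"
  unfolding locally_convex_on_def
proof
  fix w0 assume "w0 \<in> Gdom \<Omega> x2"
  then obtain a0 b0 c0 p20 u0 x10 where w0: "w0 = (a0, b0, c0, p20, u0, x10)" "vjoin x10 x2 \<in> \<Omega>"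
    unfolding Gdom_def by auto
  then obtain e where e: "e > 0" "ball x10 e \<subseteq> {x1. vjoin x1 x2 \<in> \<Omega>}"
    using open_vjoin_slice[OF \<open>open \<Omega>\<close>] open_contains_ball by blast
  define S where "S = ball w0 e \<inter> Gdom \<Omega> x2"
  \<comment> \<open>inside the ball the constraint \<open>(x', x'') \<in> \<Omega>\<close> is automatic, so \<open>S\<close> is convex\<close>
  have S_eq: "S = ball w0 e \<inter> {(a, b, c, p2, u, x1). pos_def a \<and> symmetric_mat c}"
  proof -
    have "vjoin x1 x2 \<in> \<Omega>" if "(a, b, c, p2, u, x1) \<in> ball w0 e" for a b c p2 u x1
    proof -
      have "dist x10 x1 < e"
        using that dist_last_le_dist_gpt[of x10 x1 a0 b0 c0 p20 u0 a b c p2 u] unfolding w0 by simp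
      then show ?thesis using e(2) by auto
    qed
    then show ?thesis unfolding S_def Gdom_def by auto
  qed
  have convS: "convex S"
    unfolding S_eq by (rule convex_Int[OF convex_ball convex_pos_def_symmetric])
  have "convex_on S (Gtrans F p1 x2)"
  proof (rule convex_on_if_convex_on_segments[OF convS])
    fix v v' assume "v \<in> S" "v' \<in> S"
    define d where "d = v' - v"
    have seg: "v + s *\<^sub>R d \<in> S" if "s \<in> {0..1}" for s
      using convexD[OF convS \<open>v \<in> S\<close> \<open>v' \<in> S\<close>, of "1 - s" s] that
      by (simp add: d_def algebra_simps)
    obtain a b c p2 u x1 where v: "v = (a, b, c, p2, u, x1)" by (cases v) auto
    obtain \<alpha> \<beta> \<gamma> q y z where d: "d = (\<alpha>, \<beta>, \<gamma>, q, y, z)" by (cases d) auto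
    have "pos_def a" "pos_def (a + \<alpha>)" "symmetric_mat c" "symmetric_mat (c + \<gamma>)"
      using seg[of 0] seg[of 1] unfolding S_def Gdom_def v d by auto
    then have "symmetric_mat \<alpha>" "symmetric_mat \<gamma>"
      unfolding pos_def_def symmetric_mat_def by (auto simp: matrix_algebra_simps)
    moreover have "v + s *\<^sub>R d \<in> Gdom \<Omega> x2" if "s \<in> {0..1}" for s
      using seg[OF that] by (simp add: S_def)
    ultimately show "convex_on {0..1} (\<lambda>s. Gtrans F p1 x2 (v + s *\<^sub>R (v' - v)))"
      unfolding d_def[symmetric] by (intro convex_on_Gtrans_along_line[OF C2 nonneg v d]) auto
  qed
  then show "\<exists>e>0. convex_on (ball w0 e \<inter> Gdom \<Omega> x2) (Gtrans F p1 x2)"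
    using e(1) unfolding S_def by blast
qed

lemma quad_form_lift_nonneg_if_locally_convex:
  fixes F :: "real^('n1::finite + 'n2::finite)^('n1 + 'n2) \<Rightarrow> real^('n1 + 'n2) \<Rightarrow> real
               \<Rightarrow> real^('n1 + 'n2) \<Rightarrow> real"
  assumes "open \<Omega>" and C2: "C2_derivs (sym_ext F) DF D2F (UNIV \<times> UNIV \<times> UNIV \<times> \<Omega>)"
    and convex: "locally_convex_on (Gdom \<Omega> x2) (Gtrans F p1 x2)"
    and w0: "w0 = (a, b, c, p2, u, x1)" and d: "d = (\<alpha>, \<beta>, \<gamma>, q, y, z)"
    and "pos_def a" "symmetric_mat c" "symmetric_mat \<alpha>" "symmetric_mat \<gamma>" "vjoin x1 x2 \<in> \<Omega>"
  shows "quad_form DF D2F (lift p1 x2 w0) (fst (lift_deriv w0 d)) q y z \<ge> 0"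
proof -
  have "w0 \<in> Gdom \<Omega> x2"
    using assms by (simp add: w0 Gdom_def)
  then obtain e where "e > 0" and cvx: "convex_on (ball w0 e \<inter> Gdom \<Omega> x2) (Gtrans F p1 x2)"
    using convex unfolding locally_convex_on_def by blast
  have "w0 \<in> ball w0 e" using \<open>e > 0\<close> by simp
  have "\<forall>\<^sub>F s in nhds 0. pos_def (a + s *\<^sub>R \<alpha>) \<and> vjoin (x1 + s *\<^sub>R z) x2 \<in> \<Omega> \<and> w0 + s *\<^sub>R d \<in> ball w0 e"
    using eventually_pos_def_perturb[OF \<open>pos_def a\<close> \<open>symmetric_mat \<alpha>\<close>]
      eventually_nhds_line_in_open[OF \<open>open \<Omega>\<close> \<open>vjoin x1 x2 \<in> \<Omega>\<close>, of "vjoin z 0"]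
      eventually_nhds_line_in_open[OF open_ball \<open>w0 \<in> ball w0 e\<close>, of d]
    by eventually_elim (simp add: vjoin_line)
  then obtain \<delta> where "\<delta> > 0" and near: "\<And>s. \<bar>s\<bar> < \<delta> \<Longrightarrow>
      pos_def (a + s *\<^sub>R \<alpha>) \<and> vjoin (x1 + s *\<^sub>R z) x2 \<in> \<Omega> \<and> w0 + s *\<^sub>R d \<in> ball w0 e"
    unfolding eventually_nhds_metric dist_real_def by auto
  have sym_c: "symmetric_mat (c + s *\<^sub>R \<gamma>)" for s
    using assms(7,9) by (simp add: symmetric_mat_def matrix_algebra_simps)
  have in_dom: "w0 + s *\<^sub>R d \<in> ball w0 e \<inter> Gdom \<Omega> x2" if "s \<in> {-\<delta><..<\<delta>}" for s
    using near[of s] that sym_c[of s] by (simp add: w0 d Gdom_def abs_less_iff)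
  define \<phi> where "\<phi> s = sym_ext F (lift p1 x2 (w0 + s *\<^sub>R d))" for s
  have "Gtrans F p1 x2 (w0 + s *\<^sub>R d) = \<phi> s" if "s \<in> {-\<delta><..<\<delta>}" for s
  proof -
    have "pos_def (a + s *\<^sub>R \<alpha>)" using near that by (simp add: abs_less_iff)
    from Gtrans_eq_lift[OF this sym_c] show ?thesis by (simp add: \<phi>_def w0 d)
  qed
  then have "convex_on {-\<delta><..<\<delta>} (\<lambda>s. Gtrans F p1 x2 (w0 + s *\<^sub>R d)) \<longleftrightarrow> convex_on {-\<delta><..<\<delta>} \<phi>"
    by (rule convex_on_cong)
  moreover have "convex_on {-\<delta><..<\<delta>} (\<lambda>s. Gtrans F p1 x2 (w0 + s *\<^sub>R d))"
    by (rule convex_on_along_line[OF cvx _ in_dom]) simp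
  ultimately have "convex_on {-\<delta><..<\<delta>} \<phi>" by simp
  note derivs = lift_line_derivatives[OF C2 w0 d _ \<open>symmetric_mat \<alpha>\<close>, where ?p1.0 = p1 and ?x2.0 = x2]
  have "quad_form DF D2F (lift p1 x2 (w0 + 0 *\<^sub>R d)) (fst (lift_deriv (w0 + 0 *\<^sub>R d) d)) q y z \<ge> 0"
  proof (rule convex_on_deriv2_nonneg[OF \<open>convex_on {-\<delta><..<\<delta>} \<phi>\<close>])
    show "0 \<in> {-\<delta><..<\<delta>}" using \<open>\<delta> > 0\<close> by simp
    show "(\<phi> has_real_derivative DF (lift p1 x2 (w0 + s *\<^sub>R d)) (lift_deriv (w0 + s *\<^sub>R d) d)) (at s)"
      if "s \<in> {-\<delta><..<\<delta>}" for s
      unfolding \<phi>_def[abs_def] using near[of s] that by (intro derivs(1)) (auto simp: abs_less_iff)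
    show "((\<lambda>s. DF (lift p1 x2 (w0 + s *\<^sub>R d)) (lift_deriv (w0 + s *\<^sub>R d) d)) has_real_derivative
        quad_form DF D2F (lift p1 x2 (w0 + 0 *\<^sub>R d)) (fst (lift_deriv (w0 + 0 *\<^sub>R d) d)) q y z) (at 0)"
      using near[of 0] \<open>\<delta> > 0\<close> by (intro derivs(2)) auto
  qed
  then show ?thesis by simp
qed

lemma quad_form_nonneg_if_locally_convex_Gtrans:
  fixes F :: "real^('n1::finite + 'n2::finite)^('n1 + 'n2) \<Rightarrow> real^('n1 + 'n2) \<Rightarrow> real
               \<Rightarrow> real^('n1 + 'n2) \<Rightarrow> real"
  assumes "open \<Omega>" and C2: "C2_derivs (sym_ext F) DF D2F (UNIV \<times> UNIV \<times> UNIV \<times> \<Omega>)"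
    and convex: "\<forall>(p1::real^'n1) (x2::real^'n2). locally_convex_on (Gdom \<Omega> x2) (Gtrans F p1 x2)"
    and "symmetric_mat A" "x \<in> \<Omega>" "pos_def (ul_block A)" "symmetric_mat X"
  shows "quad_form DF D2F (A, p, u, x) X X2 Y Z \<ge> 0"
proof -
  obtain a b c where abc: "pos_def a" "symmetric_mat c" "lift_mat a b c = A"
    by (rule lift_mat_surj[OF assms(4,6)])
  obtain \<alpha> \<beta> \<gamma> where \<alpha>\<beta>\<gamma>: "symmetric_mat \<alpha>" "symmetric_mat \<gamma>" "lift_mat_deriv a b \<alpha> \<beta> \<gamma> = X"
    by (rule lift_mat_deriv_surj[OF abc(1) assms(7)])
  obtain p1 p2 where p: "p = vjoin p1 p2" by (rule vjoin_surj)
  obtain x1 x2 where x: "x = vjoin x1 x2" by (rule vjoin_surj)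
  \<comment> \<open>the line through \<open>w0\<close> in direction \<open>d\<close> is lifted to a curve through \<open>(A, p, u, x)\<close> with velocity \<open>X\<close>\<close>
  define w0 where "w0 = (a, b, c, p2, u, x1)"
  define d where "d = (\<alpha>, \<beta>, \<gamma>, X2, Y, Z)"
  have start: "lift p1 x2 w0 = (A, p, u, x)" "fst (lift_deriv w0 d) = X"
    using abc \<alpha>\<beta>\<gamma> by (simp_all add: w0_def d_def lift_def lift_deriv_def p x)
  have "locally_convex_on (Gdom \<Omega> x2) (Gtrans F p1 x2)" "vjoin x1 x2 \<in> \<Omega>"
    using convex \<open>x \<in> \<Omega>\<close> x by auto
  from quad_form_lift_nonneg_if_locally_convex[OF \<open>open \<Omega>\<close> C2 this(1) w0_def d_def abc(1,2) \<alpha>\<beta>\<gamma>(1,2) this(2)]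
  show ?thesis
    unfolding start .
qed

theorem lemma3p3:
  fixes F :: "real^('n1::finite + 'n2::finite)^('n1 + 'n2) \<Rightarrow> real^('n1 + 'n2) \<Rightarrow> real
               \<Rightarrow> real^('n1 + 'n2) \<Rightarrow> real"
    and \<Omega> :: "(real^('n1 + 'n2)) set"
    and DF :: "('n1,'n2) pt \<Rightarrow> ('n1,'n2) pt \<Rightarrow> real"
    and D2F :: "('n1,'n2) pt \<Rightarrow> ('n1,'n2) pt \<Rightarrow> ('n1,'n2) pt \<Rightarrow> real"
  assumes "open \<Omega>"
    and "C2_derivs (sym_ext F) DF D2F (UNIV \<times> UNIV \<times> UNIV \<times> \<Omega>)"
  shows "(\<forall>(p1::real^'n1) (x2::real^'n2). locally_convex_on (Gdom \<Omega> x2) (Gtrans F p1 x2))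
     \<longleftrightarrow> (\<forall>A p u x. symmetric_mat A \<and> x \<in> \<Omega> \<and> pos_def (ul_block A) \<longrightarrow>
            (\<forall>X X2 Y Z. symmetric_mat X \<longrightarrow> quad_form DF D2F (A, p, u, x) X X2 Y Z \<ge> 0))"
proof
  assume "\<forall>(p1::real^'n1) (x2::real^'n2). locally_convex_on (Gdom \<Omega> x2) (Gtrans F p1 x2)"
  then show "\<forall>A p u x. symmetric_mat A \<and> x \<in> \<Omega> \<and> pos_def (ul_block A) \<longrightarrow>
      (\<forall>X X2 Y Z. symmetric_mat X \<longrightarrow> quad_form DF D2F (A, p, u, x) X X2 Y Z \<ge> 0)"
    using quad_form_nonneg_if_locally_convex_Gtrans[OF assms] by blast
next
  assume "\<forall>A p u x. symmetric_mat A \<and> x \<in> \<Omega> \<and> pos_def (ul_block A) \<longrightarrow>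
      (\<forall>X X2 Y Z. symmetric_mat X \<longrightarrow> quad_form DF D2F (A, p, u, x) X X2 Y Z \<ge> 0)"
  then show "\<forall>(p1::real^'n1) (x2::real^'n2). locally_convex_on (Gdom \<Omega> x2) (Gtrans F p1 x2)"
    using locally_convex_Gtrans_if_quad_form_nonneg[OF assms] by blast
qed

end
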